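(* Let $v\ge1$, $n\ge1$, $\epsilon>0$. Let $(Q,\hat P_n)$ and $(Q',\hat P_n')$ be RPBD schemes with parameters $(v,b,r,\lambda,\epsilon)$ and $(v,b',r',\lambda',\epsilon)$, respectively. Then the two schemes are marginally equivalent if and only if there exists a constant $t>0$ such that $(b',r',\lambda')=t(b,r,\lambda)$.
   Context: $\mathcal{X}=\{1,\dots,v\}$, $\Delta_v$ the probability vectors on $\mathcal{X}$. For $\mathcal{I}\subset\mathcal{X}\times\mathcal{Y}$, $\mathcal{I}_x=\{y:(x,y)\in\mathcal{I}\}$. For integers $v>0$, $b>r>\lambda\ge0$, a $(v,b,r,\lambda)$-RPBD is an incidence structure $(\mathcal{X},\mathcal{Y},\mathcal{I})$ with $\mathcal{Y}$ finite nonempty, $|\mathcal{Y}|=b$, $|\mathcal{I}_x|=r$ for all $x$, $|\mathcal{I}_x\cap\mathcal{I}_{x'}|=\lambda$ for all $x\neq x'$. An RPBD scheme with parameters $(v,b,r,\lambda,\epsilon)$ consists of such an RPBD, the mechanism $Q(y|x)=\alpha e^\epsilon$ if $(x,y)\in\mathcal{I}$ and $\alpha$ otherwise, $\alpha=1/(re^\epsilon+b-r)$, and the estimator $\hat P_{n,x}(Y_1,\dots,Y_n)=\frac{1}{(r-\lambda)(e^\epsilon-1)}\left(\frac{N_x}{n\alpha}-(\lambda e^\epsilon+r-\lambda)\right)$, $N_x=\sum_{i=1}^n\mathbb{1}(Y_i\in\mathcal{I}_x)$. Two schemes are marginally equivalent if, with $X_1,\dots,X_n$ i.i.d. $\sim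 P$, $Y_i\sim Q(\cdot|X_i)$, $Y_i'\sim Q'(\cdot|X_i)$, one has $\hat P_{n,x}(Y_1,\dots,Y_n)\overset{d}{=}\hat P'_{n,x}(Y_1',\dots,Y_n')$ for all $x\in\mathcal{X}$ and $P\in\Delta_v$. *)

theory Defs
  imports "HOL-Probability.Probability"
begin

text \<open>Input alphabet X = {1..v} (as naturals). An incidence structure is a pair
  (Ys, I) with I \<subseteq> X \<times> Ys; the section I_x = {y. (x,y) \<in> I}.\<close>

definition Isec :: "(nat \<times> 'y) set \<Rightarrow> nat \<Rightarrow> 'y set" where
  "Isec I x = {y. (x, y) \<in> I}"

definition is_RPBD :: "nat \<Rightarrow> nat \<Rightarrow> nat \<Rightarrow> nat \<Rightarrow> 'y set \<Rightarrow> (nat \<times> 'y) set \<Rightarrow> bool" where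
  "is_RPBD v b r lam Ys I \<longleftrightarrow>
     0 < v \<and> lam < r \<and> r < b \<and>
     finite Ys \<and> Ys \<noteq> {} \<and> card Ys = b \<and>
     I \<subseteq> {1..v} \<times> Ys \<and>
     (\<forall>x\<in>{1..v}. card (Isec I x) = r) \<and>
     (\<forall>x\<in>{1..v}. \<forall>x'\<in>{1..v}. x \<noteq> x' \<longrightarrow> card (Isec I x \<inter> Isec I x') = lam)"

definition rpbd_alpha :: "nat \<Rightarrow> nat \<Rightarrow> real \<Rightarrow> real" where
  "rpbd_alpha b r \<epsilon> = 1 / (real r * exp \<epsilon> + real b - real r)"

definition rpbd_Q :: "nat \<Rightarrow> nat \<Rightarrow> real \<Rightarrow> 'y set \<Rightarrow> (nat \<times> 'y) set \<Rightarrow> nat \<Rightarrow> 'y pmf" where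
  "rpbd_Q b r \<epsilon> Ys I x = embed_pmf (\<lambda>y. if y \<in> Ys then
        (if (x, y) \<in> I then rpbd_alpha b r \<epsilon> * exp \<epsilon> else rpbd_alpha b r \<epsilon>) else 0)"

definition rpbd_est :: "nat \<Rightarrow> nat \<Rightarrow> nat \<Rightarrow> real \<Rightarrow> (nat \<times> 'y) set \<Rightarrow> nat \<Rightarrow> nat \<Rightarrow> 'y list \<Rightarrow> real" where
  "rpbd_est b r lam \<epsilon> I n x ys =
     1 / ((real r - real lam) * (exp \<epsilon> - 1)) *
     (real (length (filter (\<lambda>y. y \<in> Isec I x) ys)) / (real n * rpbd_alpha b r \<epsilon>)
       - (real lam * exp \<epsilon> + real r - real lam))"

definition privatized_sample :: "nat \<Rightarrow> nat pmf \<Rightarrow> (nat \<Rightarrow> 'y pmf) \<Rightarrow> 'y list pmf" where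
  "privatized_sample n P Q =
     map_pmf (map snd) (replicate_pmf n (do {x \<leftarrow> P; y \<leftarrow> Q x; return_pmf (x, y)}))"

definition marginally_equivalent ::
  "nat \<Rightarrow> nat \<Rightarrow> (nat \<Rightarrow> 'y pmf) \<Rightarrow> (nat \<Rightarrow> 'y list \<Rightarrow> real)
       \<Rightarrow> (nat \<Rightarrow> 'z pmf) \<Rightarrow> (nat \<Rightarrow> 'z list \<Rightarrow> real) \<Rightarrow> bool" where
  "marginally_equivalent v n Q est Q' est' \<longleftrightarrow>
     (\<forall>x\<in>{1..v}. \<forall>P :: nat pmf. set_pmf P \<subseteq> {1..v} \<longrightarrow>
        map_pmf (est x) (privatized_sample n P Q) = map_pmf (est' x) (privatized_sample n P Q'))"

end

theory Submission
  imports Defs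
begin

text \<open>The estimator for \<open>x\<close> is an affine function of the count \<open>N\<^sub>x\<close> with positive slope
  \<open>1 / ((r - \<lambda>) (e\<^sup>\<epsilon> - 1) n \<alpha>)\<close>, and \<open>N\<^sub>x\<close> is binomial with success probability
  \<open>\<alpha> (r + (e\<^sup>\<epsilon> - 1) (\<lambda> + (r - \<lambda>) P x))\<close>. Scaling \<open>(b, r, \<lambda>)\<close> by \<open>t\<close> scales \<open>\<alpha>\<close> by
  \<open>1 / t\<close> and leaves both the affine map and the success probability unchanged. Conversely,
  affine images of non-degenerate binomial laws with positive slopes coincide only if slopes and
  success probabilities coincide; for \<open>P\<close> the point mass at \<open>x\<close> this gives
  \<open>\<alpha> r = \<alpha>' r'\<close> and \<open>\<alpha> (r - \<lambda>) = \<alpha>' (r' - \<lambda>')\<close>, and the normalisation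
  \<open>\<alpha> (r e\<^sup>\<epsilon> + b - r) = 1\<close> yields \<open>\<alpha> b = \<alpha>' b'\<close>, so \<open>t = \<alpha> / \<alpha>'\<close>.\<close>

lemma map_pmf_map_replicate_pmf:
  "map_pmf (map f) (replicate_pmf n M) = replicate_pmf n (map_pmf f M)"
proof (induction n)
  case (Suc n)
  show ?case
    by (simp add: map_bind_pmf bind_map_pmf Suc.IH[symmetric])
qed simp

lemma map_pmf_mem_eq_bernoulli_pmf:
  "map_pmf (\<lambda>y. y \<in> S) M = bernoulli_pmf (measure_pmf.prob M S)"
proof (rule pmf_eqI)
  fix i :: bool
  have "measure_pmf.prob M {y. y \<notin> S} = 1 - measure_pmf.prob M S"
    using measure_pmf.prob_compl[of S M] by (simp add: Compl_eq_Diff_UNIV[symmetric] Compl_eq)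
  then show "pmf (map_pmf (\<lambda>y. y \<in> S) M) i = pmf (bernoulli_pmf (measure_pmf.prob M S)) i"
    by (cases i) (auto simp: pmf_map vimage_def)
qed

lemma map_pmf_count_replicate_pmf:
  "map_pmf (\<lambda>ys. length (filter (\<lambda>y. y \<in> S) ys)) (replicate_pmf n M)
     = binomial_pmf n (measure_pmf.prob M S)"
proof -
  have "binomial_pmf n (measure_pmf.prob M S)
      = map_pmf (length \<circ> filter id) (replicate_pmf n (map_pmf (\<lambda>y. y \<in> S) M))"
    by (subst binomial_pmf_altdef) (auto simp: map_pmf_mem_eq_bernoulli_pmf)
  also have "\<dots> = map_pmf (\<lambda>ys. length (filter (\<lambda>y. y \<in> S) ys)) (replicate_pmf n M)"
    by (simp add: map_pmf_map_replicate_pmf[symmetric] map_pmf_comp filter_map o_def)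
  finally show ?thesis ..
qed

lemma map_pmf_affine_binomial_pmf_eqD:
  fixes A D A' D' p p' :: real
  assumes "0 < A" "0 < A'" "0 < p" "p < 1" "0 < p'" "p' < 1" "0 < n"
    and eq: "map_pmf (\<lambda>k. A * real k + D) (binomial_pmf n p)
           = map_pmf (\<lambda>k. A' * real k + D') (binomial_pmf n p')"
  shows "A = A'" "D = D'" "p = p'"
proof -
  \<comment> \<open>The extreme points of the common support fix \<open>D\<close> and \<open>A\<close>; the mass at \<open>D\<close> is \<open>(1 - p) ^ n\<close>.\<close>
  have range_eq: "(\<lambda>k. A * real k + D) ` {..n} = (\<lambda>k. A' * real k + D') ` {..n}"
    using arg_cong[OF eq, of set_pmf] assms(3-6) by simp
  have in_range: "A * real k + D \<in> (\<lambda>k. A' * real k + D') ` {..n}" if "k \<le> n" for k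
    using that unfolding range_eq[symmetric] by auto
  have in_range': "A' * real k + D' \<in> (\<lambda>k. A * real k + D) ` {..n}" if "k \<le> n" for k
    using that unfolding range_eq by auto
  have bounds: "D \<le> y" "y \<le> B * real n + D"
    if "0 \<le> B" "y \<in> (\<lambda>k. B * real k + D) ` {..n}" for B D y :: real
    using that by (auto simp: mult_left_mono)
  show D: "D = D'"
    using bounds(1)[OF _ in_range[of 0]] bounds(1)[OF _ in_range'[of 0]] assms(1,2) by simp
  show A: "A = A'"
    using bounds(2)[OF _ in_range[of n]] bounds(2)[OF _ in_range'[of n]] assms(1,2,7) D by simp
  define f where "f = (\<lambda>k::nat. A * real k + D)"
  have "inj f"
    using assms(1) by (auto simp: f_def inj_on_def)
  have "pmf (binomial_pmf n p) 0 = pmf (map_pmf f (binomial_pmf n p)) (f 0)"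
    by (rule pmf_map_inj'[OF \<open>inj f\<close>, symmetric])
  also have "\<dots> = pmf (map_pmf f (binomial_pmf n p')) (f 0)"
    using eq by (simp add: f_def A D)
  also have "\<dots> = pmf (binomial_pmf n p') 0"
    by (rule pmf_map_inj'[OF \<open>inj f\<close>])
  finally have "(1 - p) ^ n = (1 - p') ^ n"
    using assms(3-6) by simp
  then show "p = p'"
    using assms(4,6,7) by (simp add: power_eq_iff_eq_base)
qed

lemma measure_bind_pmf_finite_support:
  assumes "finite A" "set_pmf P \<subseteq> A"
  shows "measure_pmf.prob (bind_pmf P Q) S = (\<Sum>a\<in>A. pmf P a * measure_pmf.prob (Q a) S)"
proof -
  have "measure_pmf.prob (bind_pmf P Q) S = (\<integral>a. measure_pmf.prob (Q a) S \<partial>P)"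
    using measurable_measure_pmf[of Q] unfolding measure_pmf_bind
    by (subst measure_pmf.measure_bind[where N = "count_space UNIV"]) auto
  also have "\<dots> = (\<Sum>a\<in>A. pmf P a * measure_pmf.prob (Q a) S)"
    using assms by (subst integral_measure_pmf[OF assms(1)]) auto
  finally show ?thesis .
qed

lemma privatized_sample_eq_replicate_pmf:
  "privatized_sample n P Q = replicate_pmf n (bind_pmf P Q)"
proof -
  have "map_pmf snd (do {x \<leftarrow> P; y \<leftarrow> Q x; return_pmf (x, y)}) = bind_pmf P Q"
    by (simp add: map_bind_pmf bind_return_pmf' map_pmf_def[symmetric] map_pmf_comp)
  then show ?thesis
    by (simp add: privatized_sample_def map_pmf_map_replicate_pmf)
qed

lemma rpbd_alpha_pos:
  assumes "r < b"
  shows "0 < rpbd_alpha b r \<epsilon>"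
proof -
  have "0 \<le> real r * exp \<epsilon>" "real r < real b"
    using assms by simp_all
  then have "0 < real r * exp \<epsilon> + real b - real r"
    by linarith
  then show ?thesis
    by (simp add: rpbd_alpha_def)
qed

lemma rpbd_alpha_normalizes:
  assumes "r < b"
  shows "rpbd_alpha b r \<epsilon> * (real r * exp \<epsilon> + real b - real r) = 1"
  using rpbd_alpha_pos[OF assms, of \<epsilon>] by (simp add: rpbd_alpha_def)

lemma is_RPBD_Isec_subset:
  assumes "is_RPBD v b r lam Ys I"
  shows "Isec I x \<subseteq> Ys" "finite (Isec I x)"
proof -
  show "Isec I x \<subseteq> Ys"
    using assms unfolding is_RPBD_def Isec_def by auto
  moreover have "finite Ys"
    using assms unfolding is_RPBD_def by simp
  ultimately show "finite (Isec I x)"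
    by (rule finite_subset)
qed

text \<open>For \<open>x \<notin> {1..v}\<close> the weights defining \<open>rpbd_Q\<close> do not sum to \<open>1\<close>, so \<open>embed_pmf\<close>
  returns a junk distribution.\<close>

lemma pmf_rpbd_Q:
  assumes "is_RPBD v b r lam Ys I" "x \<in> {1..v}"
  shows "pmf (rpbd_Q b r \<epsilon> Ys I x) y
           = (if y \<in> Ys then if y \<in> Isec I x then rpbd_alpha b r \<epsilon> * exp \<epsilon>
              else rpbd_alpha b r \<epsilon> else 0)"
proof -
  let ?a = "rpbd_alpha b r \<epsilon>"
  define f where "f = (\<lambda>y. if y \<in> Ys then if y \<in> Isec I x then ?a * exp \<epsilon> else ?a else 0)"
  have RPBD: "finite Ys" "card Ys = b" "card (Isec I x) = r" "r < b"
    using assms unfolding is_RPBD_def by auto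
  have sub: "Isec I x \<subseteq> Ys"
    using is_RPBD_Isec_subset(1)[OF assms(1)] .
  have nonneg: "0 \<le> f y" for y
    using rpbd_alpha_pos[OF RPBD(4), of \<epsilon>] by (simp add: f_def)
  have "(\<Sum>y\<in>Ys. f y) = (\<Sum>y\<in>Isec I x. ?a * exp \<epsilon>) + (\<Sum>y\<in>Ys - Isec I x. ?a)"
    using sum.If_cases[OF RPBD(1), of "\<lambda>y. y \<in> Isec I x" "\<lambda>_. ?a * exp \<epsilon>" "\<lambda>_. ?a"] sub
    by (simp add: f_def Int_absorb1 Diff_eq[symmetric] Int_commute)
  also have "\<dots> = ?a * (real r * exp \<epsilon> + real b - real r)"
    using RPBD sub by (simp add: card_Diff_subset finite_subset of_nat_diff card_mono algebra_simps)
  also have "\<dots> = 1"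
    using rpbd_alpha_normalizes[OF RPBD(4)] .
  finally have "(\<Sum>y\<in>Ys. f y) = 1" .
  then have "(\<integral>\<^sup>+ y. ennreal (f y) \<partial>count_space UNIV) = 1"
    using RPBD(1) nonneg by (subst nn_integral_count_space') (auto simp: f_def sum_ennreal)
  then have "pmf (embed_pmf f) y = f y"
    using nonneg by (intro pmf_embed_pmf) auto
  moreover have "rpbd_Q b r \<epsilon> Ys I x = embed_pmf f"
    unfolding rpbd_Q_def f_def by (intro arg_cong[where f = embed_pmf] ext) (simp add: Isec_def)
  ultimately show ?thesis
    by (simp add: f_def)
qed

lemma measure_rpbd_Q_Isec:
  assumes "is_RPBD v b r lam Ys I" "x \<in> {1..v}" "x' \<in> {1..v}"
  shows "measure_pmf.prob (rpbd_Q b r \<epsilon> Ys I x') (Isec I x)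
           = rpbd_alpha b r \<epsilon> * (real r + (exp \<epsilon> - 1) * real (if x = x' then r else lam))"
proof -
  let ?a = "rpbd_alpha b r \<epsilon>" and ?A = "Isec I x" and ?B = "Isec I x'"
  have sub: "?A \<subseteq> Ys" "finite ?A"
    using is_RPBD_Isec_subset[OF assms(1)] by auto
  have card: "card ?A = r" "card (?A \<inter> ?B) = (if x = x' then r else lam)"
    using assms unfolding is_RPBD_def by auto
  have "card (?A \<inter> ?B) \<le> r"
    using card(1) sub(2) by (metis card_mono inf_le1)
  have "measure_pmf.prob (rpbd_Q b r \<epsilon> Ys I x') ?A = (\<Sum>y\<in>?A. pmf (rpbd_Q b r \<epsilon> Ys I x') y)"
    by (rule measure_measure_pmf_finite[OF sub(2)])
  also have "\<dots> = (\<Sum>y\<in>?A. if y \<in> ?B then ?a * exp \<epsilon> else ?a)"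
    using sub(1) by (intro sum.cong) (auto simp: pmf_rpbd_Q[OF assms(1,3)])
  also have "\<dots> = (\<Sum>y\<in>?A \<inter> ?B. ?a * exp \<epsilon>) + (\<Sum>y\<in>?A - ?B. ?a)"
    using sum.If_cases[OF sub(2), of "\<lambda>y. y \<in> ?B" "\<lambda>_. ?a * exp \<epsilon>" "\<lambda>_. ?a"]
    by (simp add: Diff_eq[symmetric] Int_def set_diff_eq)
  also have "\<dots> = ?a * (real r + (exp \<epsilon> - 1) * real (card (?A \<inter> ?B)))"
    using sub card \<open>card (?A \<inter> ?B) \<le> r\<close>
    by (simp add: card_Diff_subset_Int of_nat_diff algebra_simps)
  finally show ?thesis
    using card(2) by simp
qed

definition rpbd_hit_prob :: "nat \<Rightarrow> nat \<Rightarrow> nat \<Rightarrow> real \<Rightarrow> nat pmf \<Rightarrow> nat \<Rightarrow> real" where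
  "rpbd_hit_prob b r lam \<epsilon> P x =
     rpbd_alpha b r \<epsilon> * (real r + (exp \<epsilon> - 1) * (real lam + (real r - real lam) * pmf P x))"

lemma measure_bind_rpbd_Q_Isec:
  assumes "is_RPBD v b r lam Ys I" "set_pmf P \<subseteq> {1..v}" "x \<in> {1..v}"
  shows "measure_pmf.prob (bind_pmf P (rpbd_Q b r \<epsilon> Ys I)) (Isec I x) = rpbd_hit_prob b r lam \<epsilon> P x"
proof -
  let ?a = "rpbd_alpha b r \<epsilon>" and ?E = "exp \<epsilon>"
  have "measure_pmf.prob (bind_pmf P (rpbd_Q b r \<epsilon> Ys I)) (Isec I x)
      = (\<Sum>c\<in>{1..v}. pmf P c * measure_pmf.prob (rpbd_Q b r \<epsilon> Ys I c) (Isec I x))"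
    by (rule measure_bind_pmf_finite_support[OF _ assms(2)]) simp
  also have "\<dots> = (\<Sum>c\<in>{1..v}. pmf P c * (?a * (real r + (?E - 1) * real lam))
                   + ?a * (?E - 1) * (real r - real lam) * (if c = x then pmf P x else 0))"
    by (intro sum.cong) (auto simp: measure_rpbd_Q_Isec[OF assms(1,3)] algebra_simps)
  also have "\<dots> = ?a * (real r + (?E - 1) * real lam) + ?a * (?E - 1) * (real r - real lam) * pmf P x"
    using assms(3) sum_pmf_eq_1[OF _ assms(2)]
    by (simp add: sum.distrib sum_distrib_right[symmetric] sum_distrib_left[symmetric])
  finally show ?thesis
    by (simp add: rpbd_hit_prob_def algebra_simps)
qed

lemma rpbd_hit_prob_bounds:
  assumes "lam < r" "r < b" "0 < \<epsilon>"
  shows "0 < rpbd_hit_prob b r lam \<epsilon> P x" "rpbd_hit_prob b r lam \<epsilon> P x < 1"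
proof -
  let ?a = "rpbd_alpha b r \<epsilon>" and ?E = "exp \<epsilon>"
  define q where "q = real lam + (real r - real lam) * pmf P x"
  have "0 < ?a" "0 < ?E - 1"
    using rpbd_alpha_pos[OF assms(2)] assms(3) by simp_all
  have "(real r - real lam) * pmf P x \<le> real r - real lam"
    using assms(1) by (simp add: mult_left_le pmf_le_1)
  then have "q \<le> real r"
    unfolding q_def by linarith
  have "0 \<le> q"
    using assms(1) by (simp add: q_def)
  have "0 < real r + (?E - 1) * q"
    using assms(1) \<open>0 \<le> q\<close> \<open>0 < ?E - 1\<close> by (simp add: add_pos_nonneg)
  then show "0 < rpbd_hit_prob b r lam \<epsilon> P x"
    using \<open>0 < ?a\<close> by (simp add: rpbd_hit_prob_def q_def)
  have "real r + (?E - 1) * q < real r * ?E + real b - real r"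
    using assms(2) \<open>q \<le> real r\<close> \<open>0 < ?E - 1\<close> mult_left_mono[of q "real r" "?E - 1"]
    by (simp add: algebra_simps)
  then have "?a * (real r + (?E - 1) * q) < ?a * (real r * ?E + real b - real r)"
    using \<open>0 < ?a\<close> by simp
  then show "rpbd_hit_prob b r lam \<epsilon> P x < 1"
    using rpbd_alpha_normalizes[OF assms(2), of \<epsilon>] by (simp add: rpbd_hit_prob_def q_def)
qed

definition rpbd_count_est :: "nat \<Rightarrow> nat \<Rightarrow> nat \<Rightarrow> real \<Rightarrow> nat \<Rightarrow> nat \<Rightarrow> real" where
  "rpbd_count_est b r lam \<epsilon> n k =
     1 / ((real r - real lam) * (exp \<epsilon> - 1)) *
     (real k / (real n * rpbd_alpha b r \<epsilon>) - (real lam * exp \<epsilon> + real r - real lam))"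

lemma rpbd_est_law:
  assumes "is_RPBD v b r lam Ys I" "set_pmf P \<subseteq> {1..v}" "x \<in> {1..v}"
  shows "map_pmf (rpbd_est b r lam \<epsilon> I n x) (privatized_sample n P (rpbd_Q b r \<epsilon> Ys I))
           = map_pmf (rpbd_count_est b r lam \<epsilon> n) (binomial_pmf n (rpbd_hit_prob b r lam \<epsilon> P x))"
proof -
  have "rpbd_est b r lam \<epsilon> I n x
      = rpbd_count_est b r lam \<epsilon> n \<circ> (\<lambda>ys. length (filter (\<lambda>y. y \<in> Isec I x) ys))"
    by (simp add: fun_eq_iff rpbd_est_def rpbd_count_est_def)
  then show ?thesis
    by (simp add: map_pmf_compose privatized_sample_eq_replicate_pmf map_pmf_count_replicate_pmf
        measure_bind_rpbd_Q_Isec[OF assms])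
qed

lemma rpbd_count_est_affine:
  "rpbd_count_est b r lam \<epsilon> n
     = (\<lambda>k. 1 / ((real r - real lam) * (exp \<epsilon> - 1) * (real n * rpbd_alpha b r \<epsilon>)) * real k
            + (real lam - real lam * exp \<epsilon> - real r) / ((real r - real lam) * (exp \<epsilon> - 1)))"
proof
  fix k
  let ?d = "(real r - real lam) * (exp \<epsilon> - 1)"
  show "rpbd_count_est b r lam \<epsilon> n k
     = 1 / (?d * (real n * rpbd_alpha b r \<epsilon>)) * real k + (real lam - real lam * exp \<epsilon> - real r) / ?d"
    unfolding rpbd_count_est_def right_diff_distrib
    by (simp add: diff_divide_distrib add_divide_distrib)
qed

lemma rpbd_scale_invariant:
  assumes "0 < t" "real b' = t * real b" "real r' = t * real r" "real lam' = t * real lam"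
  shows "rpbd_count_est b' r' lam' \<epsilon> n = rpbd_count_est b r lam \<epsilon> n"
    and "rpbd_hit_prob b' r' lam' \<epsilon> = rpbd_hit_prob b r lam \<epsilon>"
proof -
  have alpha: "rpbd_alpha b' r' \<epsilon> = rpbd_alpha b r \<epsilon> / t"
    using assms(1-3) by (simp add: rpbd_alpha_def algebra_simps)
  show "rpbd_count_est b' r' lam' \<epsilon> n = rpbd_count_est b r lam \<epsilon> n"
  proof
    fix k
    have k: "real k / (real n * rpbd_alpha b' r' \<epsilon>) = t * (real k / (real n * rpbd_alpha b r \<epsilon>))"
      by (simp add: alpha)
    have r: "real r' - real lam' = t * (real r - real lam)"
      and c: "real lam' * exp \<epsilon> + real r' - real lam' = t * (real lam * exp \<epsilon> + real r - real lam)"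
      using assms(3,4) by (simp_all add: algebra_simps)
    show "rpbd_count_est b' r' lam' \<epsilon> n k = rpbd_count_est b r lam \<epsilon> n k"
      unfolding rpbd_count_est_def k r c using assms(1)
      by (simp add: mult.assoc del: times_divide_eq_right flip: right_diff_distrib)
  qed
  show "rpbd_hit_prob b' r' lam' \<epsilon> = rpbd_hit_prob b r lam \<epsilon>"
    using assms(1) by (simp add: fun_eq_iff rpbd_hit_prob_def alpha assms(3,4) field_simps)
qed

lemma rpbd_params_proportional:
  assumes "r < b" "r' < b'"
    and "rpbd_alpha b r \<epsilon> * real r = rpbd_alpha b' r' \<epsilon> * real r'"
    and "rpbd_alpha b r \<epsilon> * real lam = rpbd_alpha b' r' \<epsilon> * real lam'"
  shows "\<exists>t::real. 0 < t \<and> real b' = t * real b \<and> real r' = t * real r \<and> real lam' = t * real lam"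
proof -
  let ?a = "rpbd_alpha b r \<epsilon>" and ?a' = "rpbd_alpha b' r' \<epsilon>" and ?E = "exp \<epsilon>"
  have "0 < ?a" "0 < ?a'"
    using rpbd_alpha_pos assms(1,2) by blast+
  have "?a * real b = 1 - ?a * real r * (?E - 1)"
    using rpbd_alpha_normalizes[OF assms(1), of \<epsilon>] by (simp add: algebra_simps)
  also have "\<dots> = ?a' * real b'"
    using rpbd_alpha_normalizes[OF assms(2), of \<epsilon>] assms(3) by (simp add: algebra_simps)
  finally have "?a * real b = ?a' * real b'" .
  show ?thesis
  proof (intro exI[of _ "?a / ?a'"] conjI)
    show "0 < ?a / ?a'"
      using \<open>0 < ?a\<close> \<open>0 < ?a'\<close> by simp
    show "real b' = ?a / ?a' * real b" "real r' = ?a / ?a' * real r" "real lam' = ?a / ?a' * real lam"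
      using \<open>?a * real b = ?a' * real b'\<close> assms(3,4) \<open>0 < ?a'\<close> by (simp_all add: field_simps)
  qed
qed

lemma rpbd_point_mass_law_eqD:
  assumes "lam < r" "r < b" "lam' < r'" "r' < b'" "0 < \<epsilon>" "0 < n"
    and "map_pmf (rpbd_count_est b r lam \<epsilon> n)
           (binomial_pmf n (rpbd_hit_prob b r lam \<epsilon> (return_pmf x) x))
       = map_pmf (rpbd_count_est b' r' lam' \<epsilon> n)
           (binomial_pmf n (rpbd_hit_prob b' r' lam' \<epsilon> (return_pmf x) x))"
  shows "rpbd_alpha b r \<epsilon> * real r = rpbd_alpha b' r' \<epsilon> * real r'"
    and "rpbd_alpha b r \<epsilon> * real lam = rpbd_alpha b' r' \<epsilon> * real lam'"
proof -
  let ?a = "rpbd_alpha b r \<epsilon>" and ?a' = "rpbd_alpha b' r' \<epsilon>" and ?E = "exp \<epsilon>"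
  have "0 < ?a" "0 < ?a'" "1 < ?E"
    using rpbd_alpha_pos assms(2,4,5) by auto
  then have slopes: "0 < 1 / ((real r - real lam) * (?E - 1) * (real n * ?a))"
    "0 < 1 / ((real r' - real lam') * (?E - 1) * (real n * ?a'))"
    using assms(1,3,6) by simp_all
  note identified = map_pmf_affine_binomial_pmf_eqD[OF slopes
      rpbd_hit_prob_bounds[OF assms(1,2,5)] rpbd_hit_prob_bounds[OF assms(3,4,5)] assms(6)
      assms(7)[unfolded rpbd_count_est_affine[of b r] rpbd_count_est_affine[of b' r']]]
  have "?a * real r * ?E = ?a' * real r' * ?E"
    using identified(3) by (simp add: rpbd_hit_prob_def algebra_simps)
  then show "?a * real r = ?a' * real r'"
    by simp
  have "(?a * (real r - real lam)) * ((?E - 1) * real n)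
      = (?a' * (real r' - real lam')) * ((?E - 1) * real n)"
    using identified(1) by (simp add: ac_simps)
  then have "?a * (real r - real lam) = ?a' * (real r' - real lam')"
    using \<open>1 < ?E\<close> assms(6) by simp
  with \<open>?a * real r = ?a' * real r'\<close> show "?a * real lam = ?a' * real lam'"
    by (simp add: algebra_simps)
qed

theorem theorem7:
  fixes v n b r lam b' r' lam' :: nat and \<epsilon> :: real
    and Ys :: "'y set" and I :: "(nat \<times> 'y) set"
    and Ys' :: "'z set" and I' :: "(nat \<times> 'z) set"
  assumes "1 \<le> v" and "1 \<le> n" and "0 < \<epsilon>"
    and "is_RPBD v b r lam Ys I"
    and "is_RPBD v b' r' lam' Ys' I'"
  shows "marginally_equivalent v n
           (rpbd_Q b r \<epsilon> Ys I) (rpbd_est b r lam \<epsilon> I n)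
           (rpbd_Q b' r' \<epsilon> Ys' I') (rpbd_est b' r' lam' \<epsilon> I' n)
         \<longleftrightarrow> (\<exists>t::real. 0 < t \<and> real b' = t * real b \<and> real r' = t * real r
                          \<and> real lam' = t * real lam)"
    (is "?equivalent \<longleftrightarrow> ?proportional")
proof
  assume ?equivalent
  moreover have "1 \<in> {1..v}" "set_pmf (return_pmf 1) \<subseteq> {1..v}"
    using assms(1) by simp_all
  ultimately have
    "map_pmf (rpbd_count_est b r lam \<epsilon> n) (binomial_pmf n (rpbd_hit_prob b r lam \<epsilon> (return_pmf 1) 1))
   = map_pmf (rpbd_count_est b' r' lam' \<epsilon> n) (binomial_pmf n (rpbd_hit_prob b' r' lam' \<epsilon> (return_pmf 1) 1))"
    unfolding marginally_equivalent_def by (metis rpbd_est_law assms(4,5))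
  moreover have "lam < r" "r < b" "lam' < r'" "r' < b'"
    using assms(4,5) unfolding is_RPBD_def by auto
  ultimately show ?proportional
    using assms(2,3) by (intro rpbd_params_proportional rpbd_point_mass_law_eqD) auto
next
  assume ?proportional
  then obtain t where "0 < t" "real b' = t * real b" "real r' = t * real r" "real lam' = t * real lam"
    by blast
  then show ?equivalent
    using assms(4,5) by (simp add: marginally_equivalent_def rpbd_est_law rpbd_scale_invariant)
qed

end
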